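(* Let $G=(V,E,C,\ell)$ be an edge-labeled hypergraph with $C=\{1,\dots,k\}$, $k\ge 2$, and maximum hyperedge size $r\ge 2$. Let $(x_v^c,x_e)$ be an optimal solution of the linear program \[ \min \sum_{e\in E} x_e \quad\text{s.t.}\quad \sum_{c=1}^k x_v^c=k-1\ \ \forall v\in V;\qquad x_v^c\le x_e\ \ \forall c\in C,\ \forall e\in E\text{ with }\ell(e)=c,\ \forall v\in e;\qquad 0\le x_v^c\le 1,\ 0\le x_e\le 1. \] Given a parameter $t\in[1/2,2/3]$, define a random clustering $Y$ as follows: draw a uniformly random permutation of $C$, regarded as a priority order on the categories; for each $c$ let $S_c=\{v\in V: x_v^c<t\}$; each node $v$ belonging to at least one $S_c$ is assigned to the highest-priority category $c$ with $v\in S_c$; every node lying in no $S_c$ is assigned to an arbitrary category. Then: if $t=k/(2k-1)$, $\mathbb{E}[\mathrm{CatEdgeClus}(Y)]\le (2-1/k)\cdot\min_{Y'}\mathrm{CatEdgeClus}(Y')$; and if $t=(r+1)/(2r+1)$, $\mathbb{E}[\mathrm{CatEdgeClus}(Y)]\le (2-1/(r+1))\cdot\min_{Y'}\mathrm{CatEdgeClus}(Y')$, where the minima range over all clusterings $Y':V\to C$.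
   Context: An edge-labeled hypergraph $G=(V,E,C,\ell)$ consists of a finite node set $V$, a finite collection $E$ of hyperedges (nonempty subsets of $V$), a finite set $C$ of categories, and a labeling $\ell:E\to C$; the maximum hyperedge size is $r=\max_{e\in E}|e|$. A clustering is a map $Y:V\to C$. For $e\in E$, $m_Y(e)=1$ if $Y[i]\neq\ell(e)$ for some $i\in e$, and $m_Y(e)=0$ otherwise; $\mathrm{CatEdgeClus}(Y)=\sum_{e\in E}m_Y(e)$. *)

theory Defs
  imports Complex_Main "HOL-Library.FuncSet" "HOL-Combinatorics.Permutations"
begin

text \<open>Edge-labeled hypergraph: node set V, hyperedges indexed by a finite set E
  (hedge e is the node set of hyperedge e, so repeated hyperedges are allowed),
  categories C = {1..k}, labeling lab.\<close>

definition hypergraph ::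
  "'v set \<Rightarrow> 'e set \<Rightarrow> ('e \<Rightarrow> 'v set) \<Rightarrow> nat \<Rightarrow> ('e \<Rightarrow> nat) \<Rightarrow> bool" where
  "hypergraph V E hedge k lab \<longleftrightarrow> finite V \<and> finite E \<and>
     (\<forall>e\<in>E. hedge e \<noteq> {} \<and> hedge e \<subseteq> V \<and> lab e \<in> {1..k})"

definition max_edge_size :: "'e set \<Rightarrow> ('e \<Rightarrow> 'v set) \<Rightarrow> nat" where
  "max_edge_size E hedge = Max ((\<lambda>e. card (hedge e)) ` E)"

definition cat_edge_clus ::
  "'e set \<Rightarrow> ('e \<Rightarrow> 'v set) \<Rightarrow> ('e \<Rightarrow> nat) \<Rightarrow> ('v \<Rightarrow> nat) \<Rightarrow> nat" where
  "cat_edge_clus E hedge lab Y = card {e \<in> E. \<exists>i\<in>hedge e. Y i \<noteq> lab e}"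

definition opt_clus ::
  "'v set \<Rightarrow> 'e set \<Rightarrow> ('e \<Rightarrow> 'v set) \<Rightarrow> nat \<Rightarrow> ('e \<Rightarrow> nat) \<Rightarrow> nat" where
  "opt_clus V E hedge k lab = Min ((\<lambda>Y. cat_edge_clus E hedge lab Y) ` (V \<rightarrow>\<^sub>E {1..k}))"

definition lp_feasible ::
  "'v set \<Rightarrow> 'e set \<Rightarrow> ('e \<Rightarrow> 'v set) \<Rightarrow> nat \<Rightarrow> ('e \<Rightarrow> nat)
   \<Rightarrow> ('v \<Rightarrow> nat \<Rightarrow> real) \<Rightarrow> ('e \<Rightarrow> real) \<Rightarrow> bool" where
  "lp_feasible V E hedge k lab xv xe \<longleftrightarrow>
     (\<forall>v\<in>V. (\<Sum>c=1..k. xv v c) = real k - 1) \<and>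
     (\<forall>e\<in>E. \<forall>v\<in>hedge e. xv v (lab e) \<le> xe e) \<and>
     (\<forall>v\<in>V. \<forall>c\<in>{1..k}. 0 \<le> xv v c \<and> xv v c \<le> 1) \<and>
     (\<forall>e\<in>E. 0 \<le> xe e \<and> xe e \<le> 1)"

definition lp_optimal ::
  "'v set \<Rightarrow> 'e set \<Rightarrow> ('e \<Rightarrow> 'v set) \<Rightarrow> nat \<Rightarrow> ('e \<Rightarrow> nat)
   \<Rightarrow> ('v \<Rightarrow> nat \<Rightarrow> real) \<Rightarrow> ('e \<Rightarrow> real) \<Rightarrow> bool" where
  "lp_optimal V E hedge k lab xv xe \<longleftrightarrow> lp_feasible V E hedge k lab xv xe \<and>
     (\<forall>yv ye. lp_feasible V E hedge k lab yv ye \<longrightarrow> (\<Sum>e\<in>E. xe e) \<le> (\<Sum>e\<in>E. ye e))"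

text \<open>A priority order is a permutation p of {1..k}; category c has
  higher priority than c' iff p c < p c'. A node in some S_c
  goes to the highest-priority such c; otherwise it gets the arbitrary category
  dflt p v (allowed to depend on the permutation).\<close>
definition round_clus ::
  "nat \<Rightarrow> ('v \<Rightarrow> nat \<Rightarrow> real) \<Rightarrow> real \<Rightarrow> (nat \<Rightarrow> nat) \<Rightarrow> ((nat \<Rightarrow> nat) \<Rightarrow> 'v \<Rightarrow> nat)
   \<Rightarrow> 'v \<Rightarrow> nat" where
  "round_clus k xv t p dflt v =
     (let S = {c\<in>{1..k}. xv v c < t} in
      if S = {} then dflt p v
      else (THE c. c \<in> S \<and> (\<forall>c'\<in>S. p c \<le> p c')))"

definition expected_cost ::
  "'e set \<Rightarrow> ('e \<Rightarrow> 'v set) \<Rightarrow> nat \<Rightarrow> ('e \<Rightarrow> nat) \<Rightarrow> ('v \<Rightarrow> nat \<Rightarrow> real) \<Rightarrow> real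
   \<Rightarrow> ((nat \<Rightarrow> nat) \<Rightarrow> 'v \<Rightarrow> nat) \<Rightarrow> real" where
  "expected_cost E hedge k lab xv t dflt =
     (\<Sum>p\<in>{p. p permutes {1..k}}.
        real (cat_edge_clus E hedge lab (round_clus k xv t p dflt)))
     / real (card {p. p permutes {1..k}})"

end

theory Submission
  imports Defs
begin

text \<open>Fix an edge e with label c and LP value x_e < t. Every node of e has x_v^c \<le> x_e < t,
  so e is uncut whenever c has the highest priority among c and the set T of rival categories
  d \<noteq> c lying below the threshold at some node of e; by symmetry this happens with probability
  1/(|T|+1). If T is nonempty, some node v has x_v^d < t for a d \<noteq> c, and \<Sum>_c x_v^c = k-1
  forces x_e \<ge> x_v^c \<ge> 1 - x_v^d > 1 - t. So e is cut with probability at most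
  |T|/(|T|+1) \<le> \<alpha> x_e whenever |T| \<le> B and B/(B+1) \<le> \<alpha>(1-t), while edges with x_e \<ge> t
  cost at most 1 \<le> \<alpha> x_e when \<alpha> t \<ge> 1; the LP optimum bounds the optimal clustering from below.
  For t = k/(2k-1) take B = k-1. For t = (r+1)/(2r+1) \<le> 2/3 take B = r: a node carrying two
  rivals d, d' would give x_e \<ge> (1 - x_v^d) + (1 - x_v^d') > 2 - 2t \<ge> t.\<close>

definition ranks_first :: "('a \<Rightarrow> 'b::linorder) \<Rightarrow> 'a set \<Rightarrow> 'a \<Rightarrow> bool" where
  "ranks_first p A a \<longleftrightarrow> (\<forall>a'\<in>A. a' \<noteq> a \<longrightarrow> p a < p a')"

lemma card_permutes_ranks_first_le:
  fixes S A :: "'a::linorder set"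
  assumes "finite S" "A \<subseteq> S" "a \<in> A" "b \<in> A"
  shows "card {p. p permutes S \<and> ranks_first p A a} \<le> card {p. p permutes S \<and> ranks_first p A b}"
proof -
  let ?swap = "\<lambda>p. p \<circ> transpose a b"
  have "inj_on ?swap {p. p permutes S \<and> ranks_first p A a}"
    by (rule inj_onI) (metis comp_assoc comp_id swap_id_idempotent)
  moreover have "?swap ` {p. p permutes S \<and> ranks_first p A a} \<subseteq> {p. p permutes S \<and> ranks_first p A b}"
  proof (rule image_subsetI, clarify)
    fix p assume p: "p permutes S" "ranks_first p A a"
    have "transpose a b permutes S"
      using assms by (intro permutes_swap_id) auto
    then have "?swap p permutes S" by (rule permutes_compose[OF _ p(1)])
    moreover have "ranks_first (?swap p) A b"
      using p(2) assms(3,4) unfolding ranks_first_def by (auto simp: transpose_def)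
    ultimately show "?swap p permutes S \<and> ranks_first (?swap p) A b" ..
  qed
  moreover have "finite {p. p permutes S \<and> ranks_first p A b}"
    using finite_permutations[OF assms(1)] by (rule rev_finite_subset) auto
  ultimately show ?thesis by (rule card_inj_on_le)
qed

lemma card_permutes_ranks_first:
  fixes S A :: "'a::linorder set"
  assumes "finite S" "A \<subseteq> S" "c \<in> A"
  shows "card {p. p permutes S \<and> ranks_first p A c} * card A = card {p. p permutes S}"
proof -
  let ?P = "\<lambda>a. {p. p permutes S \<and> ranks_first p A a}"
  have finA: "finite A" using assms finite_subset by blast
  have same_card: "card (?P a) = card (?P c)" if "a \<in> A" for a
    using card_permutes_ranks_first_le[OF assms(1,2) that assms(3)]
      card_permutes_ranks_first_le[OF assms(1,2) assms(3) that] by simp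
  have "{p. p permutes S} = (\<Union>a\<in>A. ?P a)"
  proof (intro equalityI subsetI)
    fix p assume "p \<in> {p. p permutes S}"
    then have p: "p permutes S" by simp
    obtain a where a: "a \<in> A" "p a = Min (p ` A)"
      using Min_in[of "p ` A"] finA assms(3) by fastforce
    have "p a \<le> p a'" if "a' \<in> A" for a'
      using a that finA by simp
    then have "ranks_first p A a"
      unfolding ranks_first_def using permutes_inj[OF p] by (metis injD order_le_less)
    with a p show "p \<in> (\<Union>a\<in>A. ?P a)" by blast
  qed auto
  also have "card \<dots> = (\<Sum>a\<in>A. card (?P a))"
  proof (rule card_UN_disjoint[OF finA])
    show "\<forall>a\<in>A. finite (?P a)"
      using finite_permutations[OF assms(1)] by (auto intro: rev_finite_subset)
    show "\<forall>a\<in>A. \<forall>b\<in>A. a \<noteq> b \<longrightarrow> ?P a \<inter> ?P b = {}"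
      unfolding ranks_first_def by (fastforce dest: order.asym)
  qed
  also have "\<dots> = (\<Sum>a\<in>A. card (?P c))" using same_card by (rule sum.cong[OF refl])
  finally show ?thesis by simp
qed

lemma round_clus_eq_ranks_first:
  assumes "c \<in> {1..k}" "xv v c < t" "ranks_first p {d\<in>{1..k}. xv v d < t} c"
  shows "round_clus k xv t p dflt v = c"
proof -
  let ?S = "{d\<in>{1..k}. xv v d < t}"
  have c: "c \<in> ?S" using assms by simp
  have "(THE d. d \<in> ?S \<and> (\<forall>d'\<in>?S. p d \<le> p d')) = c"
  proof (rule the_equality)
    show "c \<in> ?S \<and> (\<forall>d'\<in>?S. p c \<le> p d')"
      using c assms(3) unfolding ranks_first_def by (auto simp: order_le_less)
    show "d = c" if "d \<in> ?S \<and> (\<forall>d'\<in>?S. p d \<le> p d')" for d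
      using that c assms(3) unfolding ranks_first_def by (meson leD)
  qed
  with c show ?thesis unfolding round_clus_def Let_def by auto
qed

lemma lp_feasible_sum_one_minus_le:
  assumes "lp_feasible V E hedge k lab xv xe" "v \<in> V" "c \<in> {1..k}" "D \<subseteq> {1..k} - {c}"
  shows "(\<Sum>d\<in>D. 1 - xv v d) \<le> xv v c"
proof -
  have sum_v: "(\<Sum>d=1..k. xv v d) = real k - 1" and bounds: "\<forall>d\<in>{1..k}. xv v d \<le> 1"
    using assms(1,2) unfolding lp_feasible_def by auto
  have "(\<Sum>d\<in>D. 1 - xv v d) \<le> (\<Sum>d\<in>{1..k} - {c}. 1 - xv v d)"
    using assms(4) bounds by (intro sum_mono2) auto
  also have "\<dots> = (\<Sum>d=1..k. 1 - xv v d) - (1 - xv v c)"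
    using assms(3) by (simp add: sum_diff1)
  also have "\<dots> = xv v c"
    using sum_v by (simp add: sum_subtractf)
  finally show ?thesis .
qed

lemma lp_optimal_sum_le_opt_clus:
  assumes H: "hypergraph V E hedge k lab" and "k \<ge> 1" and O: "lp_optimal V E hedge k lab xv xe"
  shows "(\<Sum>e\<in>E. xe e) \<le> real (opt_clus V E hedge k lab)"
proof -
  let ?F = "V \<rightarrow>\<^sub>E {1..k}"
  have finE: "finite E" and "finite ?F"
    using H unfolding hypergraph_def by (auto simp: finite_PiE)
  moreover have "(\<lambda>v. if v \<in> V then 1 else undefined) \<in> ?F" using \<open>k \<ge> 1\<close> by auto
  ultimately have "opt_clus V E hedge k lab \<in> cat_edge_clus E hedge lab ` ?F"
    unfolding opt_clus_def by (intro Min_in) auto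
  then obtain Y where Y: "Y \<in> ?F" "opt_clus V E hedge k lab = cat_edge_clus E hedge lab Y"
    by blast
  define yv where "yv = (\<lambda>v c. if Y v = c then 0 else (1::real))"
  define ye where "ye = (\<lambda>e. if \<exists>i\<in>hedge e. Y i \<noteq> lab e then 1 else (0::real))"
  have "lp_feasible V E hedge k lab yv ye"
    unfolding lp_feasible_def
  proof (intro conjI ballI)
    fix v assume "v \<in> V"
    then have Yv: "Y v \<in> {1..k}" using Y by auto
    have "(\<Sum>c=1..k. yv v c) = (\<Sum>c\<in>{1..k} - {Y v}. 1)"
      using Yv by (simp add: sum.remove yv_def)
    then show "(\<Sum>c=1..k. yv v c) = real k - 1"
      using Yv by (simp add: of_nat_diff)
  qed (auto simp: yv_def ye_def)
  with O have "(\<Sum>e\<in>E. xe e) \<le> (\<Sum>e\<in>E. ye e)" unfolding lp_optimal_def by blast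
  also have "\<dots> = real (cat_edge_clus E hedge lab Y)"
    using finE by (simp add: ye_def cat_edge_clus_def flip: sum.inter_filter)
  finally show ?thesis using Y by simp
qed

definition rival_cats :: "nat \<Rightarrow> ('v \<Rightarrow> nat \<Rightarrow> real) \<Rightarrow> real \<Rightarrow> 'v set \<Rightarrow> nat \<Rightarrow> nat set" where
  "rival_cats k xv t U c = {d\<in>{1..k}. d \<noteq> c \<and> (\<exists>v\<in>U. xv v d < t)}"

lemma card_rival_cats_le_k:
  assumes "c \<in> {1..k}"
  shows "card (rival_cats k xv t U c) \<le> k - 1"
proof -
  have "card (rival_cats k xv t U c) \<le> card ({1..k} - {c})"
    by (intro card_mono) (auto simp: rival_cats_def)
  with assms show ?thesis by simp
qed

lemma card_permutes_cut_le:
  assumes "c \<in> {1..k}" "\<forall>v\<in>U. xv v c < t"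
  defines "T \<equiv> card (rival_cats k xv t U c)"
  shows "real (card {p. p permutes {1..k} \<and> (\<exists>v\<in>U. round_clus k xv t p dflt v \<noteq> c)})
         \<le> real (card {p. p permutes {1..k}}) * (real T / (real T + 1))"
proof -
  let ?Perms = "{p. p permutes {1..k::nat}}"
  let ?A = "insert c (rival_cats k xv t U c)"
  let ?First = "{p. p permutes {1..k} \<and> ranks_first p ?A c}"
  have finPerms: "finite ?Perms" by (simp add: finite_permutations)
  have "card ?A = T + 1"
    unfolding T_def by (simp add: rival_cats_def)
  moreover have "?A \<subseteq> {1..k}"
    using assms(1) by (auto simp: rival_cats_def)
  ultimately have "card ?First * (T + 1) = card ?Perms"
    using card_permutes_ranks_first[of "{1..k}" ?A c] by simp
  then have card_First: "real (card ?First) = real (card ?Perms) / (real T + 1)"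
    by (simp add: field_simps flip: of_nat_mult)
  have "{p. p permutes {1..k} \<and> (\<exists>v\<in>U. round_clus k xv t p dflt v \<noteq> c)} \<subseteq> ?Perms - ?First"
  proof
    fix p assume "p \<in> {p. p permutes {1..k} \<and> (\<exists>v\<in>U. round_clus k xv t p dflt v \<noteq> c)}"
    then obtain v where p: "p permutes {1..k}" and "v \<in> U" "round_clus k xv t p dflt v \<noteq> c"
      by blast
    moreover have "xv v c < t" using assms(2) \<open>v \<in> U\<close> by blast
    then have "\<not> ranks_first p {d\<in>{1..k}. xv v d < t} c"
      using round_clus_eq_ranks_first[where xv = xv and v = v and p = p and dflt = dflt]
        assms(1) \<open>xv v c < t\<close> \<open>round_clus k xv t p dflt v \<noteq> c\<close>
      by blast
    then have "\<not> ranks_first p ?A c"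
      using \<open>v \<in> U\<close> unfolding ranks_first_def rival_cats_def by blast
    ultimately show "p \<in> ?Perms - ?First" by simp
  qed
  then have "card {p. p permutes {1..k} \<and> (\<exists>v\<in>U. round_clus k xv t p dflt v \<noteq> c)}
      \<le> card (?Perms - ?First)"
    using finPerms by (intro card_mono) auto
  also have "\<dots> = card ?Perms - card ?First"
    using finPerms by (intro card_Diff_subset) (auto intro: rev_finite_subset)
  moreover have "card ?First \<le> card ?Perms" using finPerms by (intro card_mono) auto
  ultimately have "real (card {p. p permutes {1..k} \<and> (\<exists>v\<in>U. round_clus k xv t p dflt v \<noteq> c)})
      \<le> real (card ?Perms) - real (card ?First)"
    by (simp add: of_nat_diff)
  also have "\<dots> = real (card ?Perms) * (real T / (real T + 1))"
    using card_First by (simp add: field_simps)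
  finally show ?thesis .
qed

lemma card_permutes_cut_edge_le:
  assumes H: "hypergraph V E hedge k lab" and F: "lp_feasible V E hedge k lab xv xe" and "e \<in> E"
    and \<alpha>: "\<alpha> \<ge> 0" "\<alpha> * t \<ge> 1"
    and rivals: "xe e < t \<Longrightarrow> card (rival_cats k xv t (hedge e) (lab e)) \<le> B"
    and ratio: "real B / (real B + 1) \<le> \<alpha> * (1 - t)"
  shows "real (card {p. p permutes {1..k} \<and> (\<exists>v\<in>hedge e. round_clus k xv t p dflt v \<noteq> lab e)})
         \<le> \<alpha> * xe e * real (card {p. p permutes {1..k}})"
    (is "real (card ?Cut) \<le> \<alpha> * xe e * real (card ?Perms)")
proof -
  have c: "lab e \<in> {1..k}" and eV: "hedge e \<subseteq> V" and xe_ge0: "xe e \<ge> 0"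
    and below_xe: "\<forall>v\<in>hedge e. xv v (lab e) \<le> xe e"
    using H F \<open>e \<in> E\<close> unfolding hypergraph_def lp_feasible_def by auto
  show ?thesis
  proof (cases "xe e < t")
    case False
    have "1 \<le> \<alpha> * xe e"
      using False \<alpha> mult_left_mono[of t "xe e" \<alpha>] by linarith
    have "card ?Cut \<le> card ?Perms"
      by (intro card_mono) (auto simp: finite_permutations)
    then have "real (card ?Cut) \<le> 1 * real (card ?Perms)" by simp
    also have "\<dots> \<le> \<alpha> * xe e * real (card ?Perms)"
      using \<open>1 \<le> \<alpha> * xe e\<close> by (rule mult_right_mono) simp
    finally show ?thesis .
  next
    case True
    define T where "T = card (rival_cats k xv t (hedge e) (lab e))"
    have ratio_le: "real T / (real T + 1) \<le> \<alpha> * xe e"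
    proof (cases "T = 0")
      case False
      then have "rival_cats k xv t (hedge e) (lab e) \<noteq> {}" unfolding T_def by auto
      then obtain d v where dv: "d \<in> {1..k}" "d \<noteq> lab e" "v \<in> hedge e" "xv v d < t"
        unfolding rival_cats_def by blast
      have "(\<Sum>d'\<in>{d}. 1 - xv v d') \<le> xv v (lab e)"
        using dv eV c by (intro lp_feasible_sum_one_minus_le[OF F]) auto
      with dv below_xe have "1 - t \<le> xe e" by fastforce
      have "real T / (real T + 1) \<le> real B / (real B + 1)"
        using rivals[OF True] unfolding T_def by (simp add: divide_simps algebra_simps)
      also have "\<dots> \<le> \<alpha> * (1 - t)" by (rule ratio)
      also have "\<dots> \<le> \<alpha> * xe e" using \<open>1 - t \<le> xe e\<close> \<alpha>(1) by (rule mult_left_mono)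
      finally show ?thesis .
    qed (use \<alpha> xe_ge0 in simp)
    have "\<forall>v\<in>hedge e. xv v (lab e) < t" using below_xe True by force
    then have "real (card ?Cut) \<le> real (card ?Perms) * (real T / (real T + 1))"
      unfolding T_def by (rule card_permutes_cut_le[OF c])
    also have "\<dots> \<le> real (card ?Perms) * (\<alpha> * xe e)"
      using ratio_le by (rule mult_left_mono) simp
    finally show ?thesis by (simp add: mult.commute)
  qed
qed

lemma expected_cost_eq_sum_cut:
  assumes "finite E"
  shows "expected_cost E hedge k lab xv t dflt =
    (\<Sum>e\<in>E. real (card {p. p permutes {1..k} \<and> (\<exists>v\<in>hedge e. round_clus k xv t p dflt v \<noteq> lab e)}))
    / real (card {p. p permutes {1..k}})"
proof -
  let ?Perms = "{p. p permutes {1..k::nat}}"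
  let ?cut = "\<lambda>e p. \<exists>v\<in>hedge e. round_clus k xv t p dflt v \<noteq> lab e"
  have "finite ?Perms" by (simp add: finite_permutations)
  have "(\<Sum>p\<in>?Perms. real (cat_edge_clus E hedge lab (round_clus k xv t p dflt)))
      = (\<Sum>p\<in>?Perms. \<Sum>e\<in>E. if ?cut e p then 1 else 0)"
    unfolding cat_edge_clus_def using assms by (simp flip: sum.inter_filter)
  also have "\<dots> = (\<Sum>e\<in>E. \<Sum>p\<in>?Perms. if ?cut e p then 1 else 0)"
    by (rule sum.swap)
  also have "\<dots> = (\<Sum>e\<in>E. real (card {p. p permutes {1..k} \<and> ?cut e p}))"
    using \<open>finite ?Perms\<close> by (simp flip: sum.inter_filter)
  finally show ?thesis unfolding expected_cost_def by simp
qed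

lemma expected_cost_le:
  assumes H: "hypergraph V E hedge k lab" and "k \<ge> 1" and O: "lp_optimal V E hedge k lab xv xe"
    and \<alpha>: "\<alpha> \<ge> 0" "\<alpha> * t \<ge> 1"
    and rivals: "\<And>e. e \<in> E \<Longrightarrow> xe e < t \<Longrightarrow> card (rival_cats k xv t (hedge e) (lab e)) \<le> B"
    and ratio: "real B / (real B + 1) \<le> \<alpha> * (1 - t)"
  shows "expected_cost E hedge k lab xv t dflt \<le> \<alpha> * real (opt_clus V E hedge k lab)"
proof -
  let ?N = "real (card {p. p permutes {1..k::nat}})"
  have "finite E" using H unfolding hypergraph_def by simp
  have "id \<in> {p. p permutes {1..k::nat}}" by (simp add: permutes_id)
  then have "?N > 0"
    by (metis card_gt_0_iff empty_iff finite_permutations finite_atLeastAtMost of_nat_0_less_iff)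
  have F: "lp_feasible V E hedge k lab xv xe" using O unfolding lp_optimal_def by simp
  have "expected_cost E hedge k lab xv t dflt \<le> (\<Sum>e\<in>E. \<alpha> * xe e * ?N) / ?N"
    unfolding expected_cost_eq_sum_cut[OF \<open>finite E\<close>]
    using card_permutes_cut_edge_le[OF H F _ \<alpha> rivals ratio] \<open>?N > 0\<close>
    by (intro divide_right_mono sum_mono) auto
  also have "\<dots> = \<alpha> * (\<Sum>e\<in>E. xe e)"
    using \<open>?N > 0\<close> by (simp add: sum_distrib_left flip: sum_distrib_right)
  also have "\<dots> \<le> \<alpha> * real (opt_clus V E hedge k lab)"
    using lp_optimal_sum_le_opt_clus[OF H \<open>k \<ge> 1\<close> O] \<alpha>(1) by (rule mult_left_mono)
  finally show ?thesis .
qed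

lemma card_rival_cats_le_edge_size:
  assumes H: "hypergraph V E hedge k lab" and F: "lp_feasible V E hedge k lab xv xe"
    and "e \<in> E" "xe e < t" "3 * t \<le> 2"
  shows "card (rival_cats k xv t (hedge e) (lab e)) \<le> max_edge_size E hedge"
proof -
  have c: "lab e \<in> {1..k}" and eV: "hedge e \<subseteq> V" and finE: "finite E" and finU: "finite (hedge e)"
    and below_xe: "\<forall>v\<in>hedge e. xv v (lab e) \<le> xe e"
    using H F \<open>e \<in> E\<close> unfolding hypergraph_def lp_feasible_def by (auto intro: finite_subset)
  have at_most_one: "card (rival_cats k xv t {v} (lab e)) \<le> 1" if "v \<in> hedge e" for v
  proof -
    have "d = d'" if "d \<in> rival_cats k xv t {v} (lab e)" "d' \<in> rival_cats k xv t {v} (lab e)" for d d'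
    proof (rule ccontr)
      assume "d \<noteq> d'"
      have "(\<Sum>d''\<in>{d, d'}. 1 - xv v d'') \<le> xv v (lab e)"
        using that \<open>v \<in> hedge e\<close> eV c
        by (intro lp_feasible_sum_one_minus_le[OF F]) (auto simp: rival_cats_def)
      then show False
        using \<open>d \<noteq> d'\<close> that below_xe \<open>v \<in> hedge e\<close> \<open>xe e < t\<close> \<open>3 * t \<le> 2\<close>
        by (fastforce simp: rival_cats_def)
    qed
    then show ?thesis by (simp add: card_le_Suc0_iff_eq rival_cats_def)
  qed
  have "rival_cats k xv t (hedge e) (lab e) = (\<Union>v\<in>hedge e. rival_cats k xv t {v} (lab e))"
    by (auto simp: rival_cats_def)
  then have "card (rival_cats k xv t (hedge e) (lab e)) \<le> (\<Sum>v\<in>hedge e. card (rival_cats k xv t {v} (lab e)))"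
    using card_UN_le[OF finU] by simp
  also have "\<dots> \<le> card (hedge e)"
    using sum_mono[OF at_most_one] by simp
  also have "\<dots> \<le> max_edge_size E hedge"
    unfolding max_edge_size_def using finE \<open>e \<in> E\<close> by simp
  finally show ?thesis .
qed

lemma expected_cost_le_threshold_k:
  assumes H: "hypergraph V E hedge k lab" and "k \<ge> 2" and O: "lp_optimal V E hedge k lab xv xe"
  shows "expected_cost E hedge k lab xv (real k / (2 * real k - 1)) dflt
           \<le> (2 - 1 / real k) * real (opt_clus V E hedge k lab)"
proof (rule expected_cost_le[OF H _ O, where B = "k - 1"])
  show "card (rival_cats k xv (real k / (2 * real k - 1)) (hedge e) (lab e)) \<le> k - 1"
    if "e \<in> E" for e
    using H that unfolding hypergraph_def by (intro card_rival_cats_le_k) blast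
qed (use \<open>k \<ge> 2\<close> in \<open>auto simp: of_nat_diff field_simps\<close>)

lemma expected_cost_le_threshold_edge_size:
  assumes H: "hypergraph V E hedge k lab" and "k \<ge> 1" and O: "lp_optimal V E hedge k lab xv xe"
    and r: "max_edge_size E hedge = r" "r \<ge> 1"
  defines "t \<equiv> (real r + 1) / (2 * real r + 1)"
  shows "expected_cost E hedge k lab xv t dflt \<le> (2 - 1 / (real r + 1)) * real (opt_clus V E hedge k lab)"
proof (rule expected_cost_le[OF H \<open>k \<ge> 1\<close> O, where B = r])
  have factor: "2 - 1 / (real r + 1) = (2 * real r + 1) / (real r + 1)"
    by (simp add: field_simps)
  have pos: "2 * real r + 1 > 0" "real r + 1 > 0" by simp_all
  show "1 \<le> (2 - 1 / (real r + 1)) * t" using pos unfolding factor t_def by simp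
  have "1 - t = real r / (2 * real r + 1)" using pos unfolding t_def by (simp add: field_simps)
  then show "real r / (real r + 1) \<le> (2 - 1 / (real r + 1)) * (1 - t)"
    using pos unfolding factor by simp
  have "3 * t \<le> 2" using \<open>r \<ge> 1\<close> unfolding t_def by (simp add: field_simps)
  show "card (rival_cats k xv t (hedge e) (lab e)) \<le> r" if "e \<in> E" "xe e < t" for e
  proof -
    have F: "lp_feasible V E hedge k lab xv xe" using O by (simp add: lp_optimal_def)
    show ?thesis
      using card_rival_cats_le_edge_size[OF H F that \<open>3 * t \<le> 2\<close>] r(1) by simp
  qed
qed (simp add: field_simps)

theorem mainTheorem6:
  fixes V :: "'v set" and E :: "'e set" and hedge :: "'e \<Rightarrow> 'v set"
    and k :: nat and lab :: "'e \<Rightarrow> nat"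
    and xv :: "'v \<Rightarrow> nat \<Rightarrow> real" and xe :: "'e \<Rightarrow> real"
    and dflt :: "(nat \<Rightarrow> nat) \<Rightarrow> 'v \<Rightarrow> nat"
  assumes "hypergraph V E hedge k lab"
    and "k \<ge> 2"
    and "max_edge_size E hedge \<ge> 2"
    and "lp_optimal V E hedge k lab xv xe"
    and "\<forall>p v. dflt p v \<in> {1..k}"
  shows "(expected_cost E hedge k lab xv (real k / (2 * real k - 1)) dflt
           \<le> (2 - 1 / real k) * real (opt_clus V E hedge k lab)) \<and>
         (expected_cost E hedge k lab xv
           ((real (max_edge_size E hedge) + 1) / (2 * real (max_edge_size E hedge) + 1)) dflt
           \<le> (2 - 1 / (real (max_edge_size E hedge) + 1)) * real (opt_clus V E hedge k lab))"
  \<comment> \<open>No assumption on dflt is needed: a node below no threshold has x_v^c \<ge> t for every c,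
    so it only lies in edges with x_e \<ge> t, which are charged in full.\<close>
  using expected_cost_le_threshold_k[OF assms(1,2,4)]
    expected_cost_le_threshold_edge_size[OF assms(1) _ assms(4) refl] assms(2,3)
  by simp

end
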